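(* Let $b \ge 2$ and $k \ge 1$ be integers, and set $B = b^k$. Let $m\ge 1$ be an integer with $\gcd(m,b)=1$, and let $r$ be an integer with $0\le r<m$. Then there exist infinitely many positive integers $n$ with $n\equiv r \pmod{m}$ such that \[ \mathsf{s}_b(n) \mid n \quad\text{and}\quad \mathsf{s}_B(n) \mid n, \] i.e., infinitely many such $n$ that are simultaneously $b$-Niven and $b^k$-Niven. Moreover, for any $s_0\geq 1$, there exists such an $n$ (positive, $n\equiv r \pmod m$, with $\mathsf{s}_b(n)\mid n$ and $\mathsf{s}_B(n)\mid n$) with $\mathsf{s}_b(n)=\mathsf{s}_B(n)\geq s_0$.
   Context: For an integer base $g\ge 2$ and a positive integer $c$ with base-$g$ expansion $c=\sum_{i=0}^{L} d_i g^i$, $d_i\in\{0,1,\dots,g-1\}$, $d_L\neq 0$, the base-$g$ digit sum is $\mathsf{s}_g(c)=\sum_{i=0}^L d_i$ (and $\mathsf{s}_g(0)=0$). A positive integer $c$ is called $g$-Niven if $\mathsf{s}_g(c)\mid c$. *)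

theory Defs
  imports Main
begin

fun digit_sum :: "nat \<Rightarrow> nat \<Rightarrow> nat" where
  "digit_sum g c = (if g < 2 \<or> c = 0 then 0 else c mod g + digit_sum g (c div g))"

declare digit_sum.simps[simp del]

end

theory Submission
  imports Defs "HOL-Number_Theory.Number_Theory" "HOL-Library.Infinite_Set"
begin

text \<open>
  Pick t \<ge> s0 with t \<equiv> r (mod m) and t coprime to b (Chinese remainder theorem), let
  M = m t and d = \<phi>(M). The number n = 1 + b^(k d) + ... + b^(k d (t - 1)) has exactly t digits 1 and
  all other digits 0, both in base b and in base b^k, so both digit sums equal t. By
  Euler's theorem b^(k d) \<equiv> 1 (mod M), hence n \<equiv> t (mod m t): thus t divides n and
  n \<equiv> r (mod m).
\<close>

lemma digit_sum_zero [simp]: "digit_sum g 0 = 0"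
  by (subst digit_sum.simps) simp

lemma digit_sum_one: "g \<ge> 2 \<Longrightarrow> digit_sum g 1 = 1"
  by (subst digit_sum.simps) simp

lemma digit_sum_mult_add:
  assumes "g \<ge> 2" "a < g"
  shows "digit_sum g (g * q + a) = a + digit_sum g q"
proof (cases "g * q + a = 0")
  case True
  then show ?thesis using assms by simp
next
  case False
  then show ?thesis using assms by (subst digit_sum.simps) simp
qed

lemma digit_sum_add_mult_power:
  assumes "g \<ge> 2" "a < g ^ e"
  shows "digit_sum g (a + g ^ e * c) = digit_sum g a + digit_sum g c"
  using assms(2)
proof (induction e arbitrary: a)
  case 0
  then show ?case by simp
next
  case (Suc e)
  have low: "a mod g < g" using assms(1) by simp
  have high: "a div g < g ^ e"
    using Suc.prems by (simp add: less_mult_imp_div_less mult.commute)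
  have "a + g ^ Suc e * c = g * (a div g + g ^ e * c) + a mod g"
    by (simp add: algebra_simps)
  then have "digit_sum g (a + g ^ Suc e * c) = a mod g + digit_sum g (a div g + g ^ e * c)"
    using digit_sum_mult_add[OF assms(1) low] by simp
  also have "\<dots> = a mod g + digit_sum g (a div g) + digit_sum g c"
    using Suc.IH[OF high] by simp
  also have "a mod g + digit_sum g (a div g) = digit_sum g a"
    using digit_sum_mult_add[OF assms(1) low, of "a div g"] by simp
  finally show ?case .
qed

lemma digit_sum_sum_powers:
  assumes "g \<ge> 2" "e \<ge> 1"
  shows "digit_sum g (\<Sum>i<t. (g ^ e) ^ i) = t"
proof (induction t)
  case 0
  then show ?case by simp
next
  case (Suc t)
  have "(\<Sum>i<Suc t. (g ^ e) ^ i) = 1 + g ^ e * (\<Sum>i<t. (g ^ e) ^ i)"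
    unfolding sum.lessThan_Suc_shift by (simp add: sum_distrib_left)
  moreover have "1 < g ^ e"
    using assms by (intro one_less_power) auto
  ultimately show ?case
    using digit_sum_add_mult_power[OF assms(1), of 1 e] digit_sum_one[OF assms(1)] Suc.IH
    by simp
qed

lemma cong_sum_powers_one:
  fixes X M :: nat
  assumes "[X = 1] (mod M)"
  shows "[(\<Sum>i<t. X ^ i) = t] (mod M)"
proof -
  have "[(\<Sum>i<t. X ^ i) = (\<Sum>i<t. 1)] (mod M)"
    using assms by (intro cong_sum) (metis cong_pow power_one)
  then show ?thesis by simp
qed

lemma exists_coprime_in_residue_class:
  fixes m b r s :: nat
  assumes "coprime m b" "b > 0" "r < m"
  obtains t where "t \<ge> s" "t mod m = r" "coprime t b"
proof -
  obtain x where x: "[x = r] (mod m)" "[x = 1] (mod b)"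
    using binary_chinese_remainder_nat[OF assms(1)] by blast
  define t where "t = x + m * b * s"
  have "[t = x] (mod m)"
    by (simp add: t_def cong_def mult.assoc)
  moreover have "[t = x] (mod b)"
    by (simp add: t_def cong_def mult.commute[of m b] mult.assoc)
  ultimately have "[t = r] (mod m)" "[t = 1] (mod b)"
    using x cong_trans by blast+
  moreover have "s \<le> t"
  proof -
    have "1 \<le> m * b" using assms(2,3) by simp
    then have "s \<le> m * b * s" using mult_le_mono1[of 1 "m * b" s] by simp
    then show ?thesis unfolding t_def by linarith
  qed
  ultimately show ?thesis
    using that[of t] assms(3) cong_imp_coprime[of 1 t b] by (simp add: cong_def cong_sym_eq)
qed

lemma exists_cong_with_equal_digit_sums:
  fixes b k M t :: nat
  assumes "b \<ge> 2" "k \<ge> 1" "M > 0" "coprime M b"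
  obtains n where "[n = t] (mod M)" "digit_sum b n = t" "digit_sum (b ^ k) n = t"
proof -
  define d where "d = totient M"
  have "d \<ge> 1" using assms(3) by (simp add: d_def Suc_le_eq)
  have "coprime (b ^ k) M" using assms(4) by (simp add: coprime_commute)
  then have "[(b ^ k) ^ d = 1] (mod M)"
    unfolding d_def by (rule euler_theorem)
  then have "[(\<Sum>i<t. ((b ^ k) ^ d) ^ i) = t] (mod M)"
    by (rule cong_sum_powers_one)
  moreover have "b ^ k \<ge> 2"
    using assms(1) power_increasing[OF assms(2), of b] by simp
  moreover have "(b ^ k) ^ d = b ^ (k * d)" "k * d \<ge> 1"
    using assms(2) \<open>d \<ge> 1\<close> by (simp_all add: power_mult)
  ultimately show ?thesis
    using that digit_sum_sum_powers[of "b ^ k" d t] digit_sum_sum_powers[OF assms(1), of "k * d" t]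
      \<open>d \<ge> 1\<close> by simp
qed

lemma exists_large_Niven_with_equal_digit_sums:
  fixes b k m r s :: nat
  assumes "b \<ge> 2" "k \<ge> 1" "coprime m b" "r < m"
  shows "\<exists>n \<ge> s. n > 0 \<and> n mod m = r \<and> digit_sum b n dvd n \<and>
    digit_sum b n = digit_sum (b ^ k) n \<and> digit_sum b n \<ge> s"
proof -
  obtain t where t: "t \<ge> Suc s" "t mod m = r" "coprime t b"
    using exists_coprime_in_residue_class[OF assms(3) _ assms(4), where s = "Suc s"] assms(1)
    by auto
  obtain n where n: "[n = t] (mod m * t)" "digit_sum b n = t" "digit_sum (b ^ k) n = t"
    using exists_cong_with_equal_digit_sums[OF assms(1,2), where M = "m * t" and t = t]
      assms(3,4) t(1,3) by auto
  have "[n = t] (mod t)"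
    using cong_modulus_mult_nat[of n t t m] n(1) by (simp add: mult.commute[of m t])
  then have "t dvd n" by (simp add: cong_def dvd_eq_mod_eq_0)
  have "n mod m = r"
    using cong_modulus_mult_nat[of n t m t] n(1) t(2) by (simp add: cong_def)
  have "n > 0" using n(2) t(1) by (cases "n = 0") auto
  then have "s \<le> n" using dvd_imp_le[OF \<open>t dvd n\<close>] t(1) by simp
  show ?thesis
    using \<open>n > 0\<close> \<open>s \<le> n\<close> \<open>n mod m = r\<close> \<open>t dvd n\<close> n(2,3) t(1)
    by (intro exI[of _ n]) simp
qed

theorem theorem1p1:
  fixes b k m r :: nat
  assumes "b \<ge> 2" and "k \<ge> 1" and "m \<ge> 1" and "coprime m b" and "r < m"
  shows "infinite {n::nat. n > 0 \<and> n mod m = r \<and>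
                    digit_sum b n dvd n \<and> digit_sum (b ^ k) n dvd n}
       \<and> (\<forall>s0::nat. s0 \<ge> 1 \<longrightarrow>
            (\<exists>n::nat. n > 0 \<and> n mod m = r \<and>
               digit_sum b n dvd n \<and> digit_sum (b ^ k) n dvd n \<and>
               digit_sum b n = digit_sum (b ^ k) n \<and> digit_sum b n \<ge> s0))"
proof -
  note large = exists_large_Niven_with_equal_digit_sums[OF assms(1,2,4,5)]
  have "infinite {n. n > 0 \<and> n mod m = r \<and> digit_sum b n dvd n \<and> digit_sum (b ^ k) n dvd n}"
    unfolding infinite_nat_iff_unbounded_le
  proof
    fix s
    from large[of s] show "\<exists>n \<ge> s. n \<in> {n. n > 0 \<and> n mod m = r \<and>
        digit_sum b n dvd n \<and> digit_sum (b ^ k) n dvd n}"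
      by auto
  qed
  moreover have "\<exists>n. n > 0 \<and> n mod m = r \<and> digit_sum b n dvd n \<and>
      digit_sum (b ^ k) n dvd n \<and> digit_sum b n = digit_sum (b ^ k) n \<and> digit_sum b n \<ge> s0"
    for s0
    using large[of s0] by auto
  ultimately show ?thesis by blast
qed

end
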